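(* Let $C$ be a finite order SISO deterministic program with uniformly distributed secret input. Let $S=\{N\in\mathbb{N}^+ : |\mathcal{O}_N|\ge 2\}$, and assume $S\neq\emptyset$. Then for every $\alpha\in(0,\infty]$, $$0<\inf_{N\in S}\frac{IL_\alpha(C,N)}{T_\alpha(\mathbf{p}_N)}\le\sup_{N\in S}\frac{IL_\alpha(C,N)}{T_\alpha(\mathbf{p}_N)}<\infty.$$
   Context: A SISO deterministic program $C$ is a family indexed by $N\in\mathbb{N}^+$: for each $N$, a random variable $A$ uniformly distributed on $\mathcal{A}_N=\{0,1,\dots,N-1\}$, and a surjective map $F_N$ from $\mathcal{A}_N$ onto a finite set $\mathcal{O}_N$. The output is $O=F_N(A)$, and $\mathbf{p}_N$ denotes its distribution vector, so $\mathbf{p}_N(o)=|F_N^{-1}(o)|/N$. $C$ is of finite order (an FOP) if $\sup_N\|\mathbf{p}_N\|_0<\infty$, where $\|\mathbf{p}\|_0$ is the number of nonzero entries of $\mathbf{p}$; equivalently, $\sup_N|\mathcal{O}_N|<\infty$. For a probability vector $\mathbf{p}=(p_1,\dots,p_n)$ and $\alpha\in(0,\infty]$, the Rényi entropy is $H_\alpha(\mathbf{p})=\frac{1}{1-\alpha}\log\sum_i p_i^\alpha$ for $\alpha\notin\{1,\infty\}$. The limiting cases are $H_1(\mathbf{p})=-\sum_i p_i\log p_i$ and $H_\infty(\mathbf{p})=-\log\max_i p_i$. The $\alpha$-information leakage is $IL_\alpha(C,N)=H_\alpha(\mathbf{p}_N)$. With $p_1=\|\mathbf{p}\|_\infty=\max_i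 p_i$, define $$T_\alpha(\mathbf{p})=\begin{cases}1-p_1 & \text{if } \alpha>1 \text{ (including } \alpha=\infty),\\ -(1-p_1)\log(1-p_1) & \text{if } \alpha=1,\\ (1-p_1)^\alpha & \text{if } 0<\alpha<1.\end{cases}$$ *)

theory Defs
  imports "HOL-Analysis.Analysis"
begin

text \<open>A SISO deterministic program is given by a family of maps F N from
  {0..<N} to an output type; the output set O_N is the image (so F N is
  surjective onto O_N by construction).\<close>

definition outputs :: "(nat \<Rightarrow> nat \<Rightarrow> 'o) \<Rightarrow> nat \<Rightarrow> 'o set" where
  "outputs F N = F N ` {..<N}"

definition finite_order :: "(nat \<Rightarrow> nat \<Rightarrow> 'o) \<Rightarrow> bool" where
  "finite_order F \<longleftrightarrow> (\<exists>B. \<forall>N>0. card (outputs F N) \<le> B)"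

definition pdist :: "(nat \<Rightarrow> nat \<Rightarrow> 'o) \<Rightarrow> nat \<Rightarrow> 'o \<Rightarrow> real" where
  "pdist F N y = real (card {a \<in> {..<N}. F N a = y}) / real N"

definition pmax :: "(nat \<Rightarrow> nat \<Rightarrow> 'o) \<Rightarrow> nat \<Rightarrow> real" where
  "pmax F N = Max (pdist F N ` outputs F N)"

text \<open>Renyi entropy (natural logarithm) of the output distribution, alpha in (0,\<infinity>].
  Sums range over the support O_N (all entries nonzero).\<close>
definition renyi :: "ereal \<Rightarrow> (nat \<Rightarrow> nat \<Rightarrow> 'o) \<Rightarrow> nat \<Rightarrow> real" where
  "renyi \<alpha> F N =
    (if \<alpha> = \<infinity> then - ln (pmax F N)
     else if \<alpha> = 1 then - (\<Sum>y\<in>outputs F N. pdist F N y * ln (pdist F N y))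
     else (1 / (1 - real_of_ereal \<alpha>)) *
          ln (\<Sum>y\<in>outputs F N. pdist F N y powr real_of_ereal \<alpha>))"

definition leakage :: "ereal \<Rightarrow> (nat \<Rightarrow> nat \<Rightarrow> 'o) \<Rightarrow> nat \<Rightarrow> real" where
  "leakage \<alpha> F N = renyi \<alpha> F N"

definition Tfun :: "ereal \<Rightarrow> (nat \<Rightarrow> nat \<Rightarrow> 'o) \<Rightarrow> nat \<Rightarrow> real" where
  "Tfun \<alpha> F N =
    (let p1 = pmax F N in
     if \<alpha> > 1 then 1 - p1
     else if \<alpha> = 1 then - (1 - p1) * ln (1 - p1)
     else (1 - p1) powr real_of_ereal \<alpha>)"

end

theory Submission
  imports Defs
begin

text \<open>Let M be the largest output probability and q = 1 - M the mass off a mode.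
  If the support has between 2 and n points, then 1/n \<le> M < 1 and every Renyi entropy is
  squeezed between multiples of T_\<alpha> whose factors depend only on \<alpha> and n:
  for \<alpha> > 1 the power sum lies between M^\<alpha> and M^(\<alpha>-1), and -ln M is comparable to q;
  for \<alpha> = 1 the off-mode outcomes contribute between -q ln q and n q - q ln q;
  for \<alpha> < 1 the power sum lies between M + q^\<alpha> and 1 + n q^\<alpha>.
  A finite order program has a uniform bound n on |O_N|, so IL_\<alpha>/T_\<alpha> stays in a
  fixed interval [c, C] with c > 0.\<close>

lemma neg_mult_ln_le:
  fixes x q :: real
  assumes "0 < x" "0 < q"
  shows "- x * ln x \<le> q - x - x * ln q"
proof -
  have "ln q - ln x \<le> q / x - 1"
    using ln_le_minus_one[of "q / x"] assms by (simp add: ln_div)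
  then have "x * (ln q - ln x) \<le> x * (q / x - 1)"
    using assms by (intro mult_left_mono) auto
  then show ?thesis
    using assms by (simp add: algebra_simps)
qed

lemma half_le_ln_one_plus:
  fixes x :: real
  assumes "0 \<le> x" "x \<le> 1"
  shows "x / 2 \<le> ln (1 + x)"
proof -
  have "x / 2 \<le> x / (1 + x)"
    using assms by (intro divide_left_mono) auto
  also have "\<dots> \<le> ln (1 + x)"
    using ln_le_minus_one[of "1 / (1 + x)"] assms by (simp add: ln_div field_simps)
  finally show ?thesis .
qed

lemma one_minus_powr_pos:
  assumes "1 \<le> n" "0 < b"
  shows "0 < 1 - (1 - 1 / real n) powr b"
proof -
  have "(1 - 1 / real n) powr b < 1 powr b"
    using assms by (intro powr_less_mono2) auto
  then show ?thesis
    by simp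
qed

locale finite_distribution =
  fixes Os :: "'a set" and p :: "'a \<Rightarrow> real"
  assumes finite_support: "finite Os"
    and prob_pos: "\<And>y. y \<in> Os \<Longrightarrow> 0 < p y"
    and sum_prob: "sum p Os = 1"
begin

definition max_prob :: real where
  "max_prob = Max (p ` Os)"

lemma support_nonempty: "Os \<noteq> {}"
  using sum_prob by auto

lemma prob_le_max_prob: "y \<in> Os \<Longrightarrow> p y \<le> max_prob"
  unfolding max_prob_def using finite_support by simp

lemma max_prob_attained:
  obtains y where "y \<in> Os" "p y = max_prob"
proof -
  have "max_prob \<in> p ` Os"
    unfolding max_prob_def using finite_support support_nonempty by (intro Max_in) auto
  then show thesis
    using that by auto
qed

lemma max_prob_pos: "0 < max_prob"
proof -
  obtain y where "y \<in> Os" "p y = max_prob"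
    by (rule max_prob_attained)
  then show ?thesis
    using prob_pos by force
qed

lemma inverse_card_le_max_prob: "1 / real (card Os) \<le> max_prob"
proof -
  have "1 \<le> real (card Os) * max_prob"
    using sum_bounded_above[of Os p max_prob, OF prob_le_max_prob] sum_prob by simp
  moreover have "0 < card Os"
    using finite_support support_nonempty by (simp add: card_gt_0_iff)
  ultimately show ?thesis
    by (simp add: divide_le_eq mult.commute)
qed

lemma sum_remove_mode:
  assumes "y \<in> Os" "p y = max_prob"
  shows "sum p (Os - {y}) = 1 - max_prob"
  using sum.remove[OF finite_support assms(1), of p] assms sum_prob by simp

lemma prob_le_one_minus_max_prob:
  assumes "y \<in> Os" "p y = max_prob" "z \<in> Os - {y}"
  shows "p z \<le> 1 - max_prob"
  using member_le_sum[of z "Os - {y}" p] assms finite_support prob_pos sum_remove_mode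
  by (simp add: less_imp_le)

lemma power_sum_bounds_gt1:
  assumes "1 < a"
  shows "max_prob powr a \<le> (\<Sum>y\<in>Os. p y powr a)"
    and "(\<Sum>y\<in>Os. p y powr a) \<le> max_prob powr (a - 1)"
proof -
  obtain y where y: "y \<in> Os" "p y = max_prob"
    by (rule max_prob_attained)
  show "max_prob powr a \<le> (\<Sum>y\<in>Os. p y powr a)"
    using member_le_sum[of y Os "\<lambda>y. p y powr a"] y finite_support by simp
  have "(\<Sum>y\<in>Os. p y powr a) = (\<Sum>y\<in>Os. p y * p y powr (a - 1))"
    using prob_pos by (intro sum.cong) (simp_all add: powr_mult_base less_imp_le)
  also have "\<dots> \<le> (\<Sum>y\<in>Os. p y * max_prob powr (a - 1))"
    using prob_pos prob_le_max_prob assms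
    by (intro sum_mono mult_left_mono powr_mono2) (auto simp: less_imp_le)
  also have "\<dots> = max_prob powr (a - 1)"
    using sum_prob by (simp add: sum_distrib_right[symmetric])
  finally show "(\<Sum>y\<in>Os. p y powr a) \<le> max_prob powr (a - 1)" .
qed

lemma entropy_remove_mode:
  assumes "y \<in> Os" "p y = max_prob"
  shows "- (\<Sum>z\<in>Os. p z * ln (p z)) = - max_prob * ln max_prob + (\<Sum>z\<in>Os - {y}. - p z * ln (p z))"
  using sum.remove[OF finite_support assms(1), of "\<lambda>z. p z * ln (p z)"] assms
  by (simp add: sum_negf)

end

locale nontrivial_distribution = finite_distribution +
  fixes n :: nat
  assumes two_le_card: "2 \<le> card Os"
    and card_le: "card Os \<le> n"
begin

lemma max_prob_less_one: "max_prob < 1"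
proof -
  obtain y where y: "y \<in> Os" "p y = max_prob"
    by (rule max_prob_attained)
  have "card (Os - {y}) = card Os - 1"
    using y finite_support by simp
  then have "Os - {y} \<noteq> {}"
    using two_le_card by (intro notI) simp
  then have "0 < sum p (Os - {y})"
    using finite_support prob_pos by (intro sum_pos) auto
  then show ?thesis
    using sum_remove_mode[OF y] by simp
qed

lemma inverse_le_max_prob: "1 / real n \<le> max_prob"
proof -
  have "1 / real n \<le> 1 / real (card Os)"
    using card_le two_le_card by (intro divide_left_mono) auto
  then show ?thesis
    using inverse_card_le_max_prob by linarith
qed

lemma card_remove_mode_le: "y \<in> Os \<Longrightarrow> real (card (Os - {y})) \<le> real n"
  using card_le finite_support by simp

lemma neg_ln_max_prob_bounds:
  "1 - max_prob \<le> - ln max_prob"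
  "- ln max_prob \<le> real n * (1 - max_prob)"
proof -
  have M: "0 < max_prob" "1 / real n \<le> max_prob"
    using max_prob_pos inverse_le_max_prob by auto
  show "1 - max_prob \<le> - ln max_prob"
    using ln_le_minus_one[OF M(1)] by simp
  have "- ln max_prob \<le> 1 / max_prob - 1"
    using ln_le_minus_one[of "1 / max_prob"] M by (simp add: ln_div)
  also have "\<dots> = 1 / max_prob * (1 - max_prob)"
    using M by (simp add: field_simps)
  also have "\<dots> \<le> real n * (1 - max_prob)"
    using M max_prob_less_one two_le_card card_le
    by (intro mult_right_mono) (auto simp: divide_le_eq mult.commute)
  finally show "- ln max_prob \<le> real n * (1 - max_prob)" .
qed


lemma renyi_gt1_bounds:
  assumes "1 < a"
  defines "H \<equiv> 1 / (1 - a) * ln (\<Sum>y\<in>Os. p y powr a)"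
  shows "1 - max_prob \<le> H"
    and "H \<le> a / (a - 1) * real n * (1 - max_prob)"
proof -
  define S where "S = (\<Sum>y\<in>Os. p y powr a)"
  have M: "0 < max_prob"
    by (rule max_prob_pos)
  have S: "max_prob powr a \<le> S" "S \<le> max_prob powr (a - 1)"
    using power_sum_bounds_gt1[OF assms(1)] unfolding S_def by auto
  have S_pos: "0 < S"
    using S(1) M powr_gt_zero[of max_prob a] by linarith
  have lnS: "a * ln max_prob \<le> ln S" "ln S \<le> (a - 1) * ln max_prob"
    using ln_mono[OF S(1)] ln_mono[OF S(2) S_pos] M by simp_all
  have H: "H = - ln S / (a - 1)"
    using assms(1) unfolding H_def S_def by (simp add: field_simps)
  have "- ln max_prob \<le> H"
    unfolding H using lnS(2) assms(1) by (simp add: divide_le_eq mult.commute)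
  moreover have "H \<le> a / (a - 1) * - ln max_prob"
    unfolding H using lnS(1) assms(1) by (simp add: divide_le_eq le_divide_eq mult.commute)
  moreover have "a / (a - 1) * - ln max_prob \<le> a / (a - 1) * (real n * (1 - max_prob))"
    using neg_ln_max_prob_bounds(2) assms(1) by (intro mult_left_mono) auto
  ultimately show "1 - max_prob \<le> H" "H \<le> a / (a - 1) * real n * (1 - max_prob)"
    using neg_ln_max_prob_bounds(1) by auto
qed

lemma shannon_bounds:
  defines "T \<equiv> - (1 - max_prob) * ln (1 - max_prob)"
    and "H \<equiv> - (\<Sum>y\<in>Os. p y * ln (p y))"
  shows "0 < T" "T \<le> H" "H \<le> (real n * real n + 1) * T"
proof -
  obtain y where y: "y \<in> Os" "p y = max_prob"
    by (rule max_prob_attained)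
  define q where "q = 1 - max_prob"
  have q: "0 < q" "q < 1"
    using max_prob_less_one max_prob_pos unfolding q_def by auto
  have residual: "sum p (Os - {y}) = q"
    using sum_remove_mode[OF y] unfolding q_def .
  have T: "T = (\<Sum>z\<in>Os - {y}. - p z * ln q)"
    unfolding T_def q_def[symmetric] using residual by (simp add: sum_negf sum_distrib_right[symmetric])
  have H: "H = - max_prob * ln max_prob + (\<Sum>z\<in>Os - {y}. - p z * ln (p z))"
    unfolding H_def by (rule entropy_remove_mode[OF y])
  show "0 < T"
    unfolding T_def q_def[symmetric] using q by (simp add: mult_pos_neg)
  have "0 \<le> - max_prob * ln max_prob"
    using max_prob_pos max_prob_less_one by (intro mult_nonpos_nonpos) auto
  moreover have "(\<Sum>z\<in>Os - {y}. - p z * ln q) \<le> (\<Sum>z\<in>Os - {y}. - p z * ln (p z))"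
    using prob_pos prob_le_one_minus_max_prob[OF y] unfolding q_def
    by (intro sum_mono mult_left_mono_neg ln_mono) (auto simp: less_imp_le)
  ultimately show "T \<le> H"
    unfolding H T by simp
  have "- max_prob * ln max_prob \<le> q"
    using neg_mult_ln_le[of max_prob 1] max_prob_pos unfolding q_def by simp
  moreover have "(\<Sum>z\<in>Os - {y}. - p z * ln (p z)) \<le> (\<Sum>z\<in>Os - {y}. q - p z - p z * ln q)"
    using neg_mult_ln_le prob_pos q by (intro sum_mono) auto
  moreover have "(\<Sum>z\<in>Os - {y}. q - p z - p z * ln q) = real (card (Os - {y})) * q - q + T"
    unfolding T using residual by (simp add: sum_subtractf sum_negf sum_distrib_right[symmetric])
  moreover have "real (card (Os - {y})) * q \<le> real n * q"
    using card_remove_mode_le[OF y(1)] q by (intro mult_right_mono) auto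
  ultimately have "H \<le> real n * q + T"
    unfolding H by linarith
  moreover have "q \<le> real n * T"
  proof -
    have "1 / real n \<le> - ln q"
      using inverse_le_max_prob ln_le_minus_one[OF q(1)] unfolding q_def by linarith
    then have "q * (1 / real n) \<le> q * - ln q"
      using q by (intro mult_left_mono) auto
    then have "q / real n \<le> T"
      unfolding T_def q_def[symmetric] by simp
    then show ?thesis
      using two_le_card card_le by (simp add: divide_le_eq mult.commute)
  qed
  ultimately show "H \<le> (real n * real n + 1) * T"
    using mult_left_mono[of q "real n * T" "real n"] by (simp add: algebra_simps)
qed

lemma power_sum_bounds_lt1:
  assumes "0 < a" "a < 1"
  shows "max_prob + (1 - max_prob) powr a \<le> (\<Sum>y\<in>Os. p y powr a)"
    and "(\<Sum>y\<in>Os. p y powr a) \<le> 1 + real n * (1 - max_prob) powr a"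
proof -
  obtain y where y: "y \<in> Os" "p y = max_prob"
    by (rule max_prob_attained)
  define q where "q = 1 - max_prob"
  have q: "0 < q" "q < 1"
    using max_prob_less_one max_prob_pos unfolding q_def by auto
  have S: "(\<Sum>y\<in>Os. p y powr a) = max_prob powr a + (\<Sum>z\<in>Os - {y}. p z powr a)"
    using sum.remove[OF finite_support y(1), of "\<lambda>z. p z powr a"] y by simp
  have "max_prob \<le> max_prob powr a"
    using powr_mono'[of a 1 max_prob] assms max_prob_pos max_prob_less_one by simp
  moreover have "q powr a \<le> (\<Sum>z\<in>Os - {y}. p z powr a)"
  proof -
    have "q powr a = (\<Sum>z\<in>Os - {y}. p z) * q powr (a - 1)"
      using sum_remove_mode[OF y] q powr_mult_base[of q "a - 1"] unfolding q_def by simp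
    also have "\<dots> \<le> (\<Sum>z\<in>Os - {y}. p z * p z powr (a - 1))"
      unfolding sum_distrib_right using prob_pos prob_le_one_minus_max_prob[OF y] assms
      unfolding q_def by (intro sum_mono mult_left_mono powr_mono2') (auto simp: less_imp_le)
    also have "\<dots> = (\<Sum>z\<in>Os - {y}. p z powr a)"
      using prob_pos by (intro sum.cong) (simp_all add: powr_mult_base less_imp_le)
    finally show ?thesis .
  qed
  ultimately show "max_prob + (1 - max_prob) powr a \<le> (\<Sum>y\<in>Os. p y powr a)"
    unfolding S q_def by simp
  have "max_prob powr a \<le> 1"
    using max_prob_pos max_prob_less_one assms by (intro powr_le1) auto
  moreover have "(\<Sum>z\<in>Os - {y}. p z powr a) \<le> (\<Sum>z\<in>Os - {y}. q powr a)"
    using prob_pos prob_le_one_minus_max_prob[OF y] assms unfolding q_def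
    by (intro sum_mono powr_mono2) (auto simp: less_imp_le)
  moreover have "(\<Sum>z\<in>Os - {y}. q powr a) \<le> real n * q powr a"
    using card_remove_mode_le[OF y(1)] by (simp add: mult_right_mono)
  ultimately show "(\<Sum>y\<in>Os. p y powr a) \<le> 1 + real n * (1 - max_prob) powr a"
    unfolding S q_def by linarith
qed

lemma renyi_lt1_bounds:
  assumes "0 < a" "a < 1"
  defines "H \<equiv> 1 / (1 - a) * ln (\<Sum>y\<in>Os. p y powr a)"
  shows "0 < (1 - max_prob) powr a"
    and "(1 - (1 - 1 / real n) powr (1 - a)) / (2 * (1 - a)) * (1 - max_prob) powr a \<le> H"
    and "H \<le> real n / (1 - a) * (1 - max_prob) powr a"
proof -
  define q where "q = 1 - max_prob"
  define r where "r = (1 - 1 / real n) powr (1 - a)"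
  define S where "S = (\<Sum>y\<in>Os. p y powr a)"
  define x where "x = q powr a - q"
  have q: "0 < q" "q < 1" "q \<le> 1 - 1 / real n"
    using max_prob_less_one max_prob_pos inverse_le_max_prob unfolding q_def by auto
  show "0 < (1 - max_prob) powr a"
    using q unfolding q_def by simp
  have S: "1 + x \<le> S" "S \<le> 1 + real n * q powr a"
    using power_sum_bounds_lt1[OF assms(1,2)] unfolding S_def x_def q_def by auto
  \<comment> \<open>Since q \<le> 1 - 1/n, the excess x of the power sum over 1 is a fixed fraction of q^a.\<close>
  have "q = q powr a * q powr (1 - a)"
    using q by (simp add: powr_add[symmetric])
  moreover have "q powr (1 - a) \<le> r"
    unfolding r_def using q assms by (intro powr_mono2) auto
  ultimately have x_lower: "q powr a * (1 - r) \<le> x"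
    unfolding x_def using q mult_left_mono[of "q powr (1 - a)" r "q powr a"]
    by (simp add: algebra_simps)
  have "r \<le> 1"
    unfolding r_def using two_le_card card_le assms by (intro powr_le1) auto
  then have "0 \<le> q powr a * (1 - r)"
    by simp
  then have "0 \<le> x"
    using x_lower by linarith
  moreover have "x \<le> 1"
    unfolding x_def using q assms powr_le1[of a q] by linarith
  ultimately have "q powr a * (1 - r) / 2 \<le> ln S"
    using half_le_ln_one_plus[of x] ln_mono[OF S(1)] x_lower by linarith
  then have "q powr a * (1 - r) / 2 / (1 - a) \<le> ln S / (1 - a)"
    using assms by (intro divide_right_mono) auto
  then show "(1 - r) / (2 * (1 - a)) * (1 - max_prob) powr a \<le> H"
    unfolding H_def S_def[symmetric] q_def[symmetric] by (simp add: mult.commute)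
  have "ln S \<le> real n * q powr a"
    using ln_le_minus_one[of S] S \<open>0 \<le> x\<close> by linarith
  then have "ln S / (1 - a) \<le> real n * q powr a / (1 - a)"
    using assms by (intro divide_right_mono) auto
  then show "H \<le> real n / (1 - a) * (1 - max_prob) powr a"
    unfolding H_def S_def[symmetric] q_def[symmetric] by simp
qed

end

lemma finite_distribution_outputs:
  assumes "0 < N"
  shows "finite_distribution (outputs F N) (pdist F N)"
proof
  show "finite (outputs F N)"
    unfolding outputs_def by simp
  show "0 < pdist F N y" if y: "y \<in> outputs F N" for y
  proof -
    obtain a where "a < N" "F N a = y"
      using y unfolding outputs_def by auto
    then have "{a \<in> {..<N}. F N a = y} \<noteq> {}"
      by auto
    then show ?thesis
      unfolding pdist_def using assms by (simp add: card_gt_0_iff)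
  qed
  have "card {..<N} = (\<Sum>y\<in>outputs F N. card {a \<in> {..<N}. F N a = y})"
    using sum.image_gen[of "{..<N}" "\<lambda>_. 1 :: nat" "F N"] unfolding outputs_def by simp
  then have "real N = (\<Sum>y\<in>outputs F N. real (card {a \<in> {..<N}. F N a = y}))"
    by (metis card_lessThan of_nat_sum)
  then show "sum (pdist F N) (outputs F N) = 1"
    unfolding pdist_def using assms by (simp add: sum_divide_distrib[symmetric])
qed

lemma pmax_eq_max_prob:
  "0 < N \<Longrightarrow> pmax F N = finite_distribution.max_prob (outputs F N) (pdist F N)"
  unfolding pmax_def by (simp add: finite_distribution.max_prob_def finite_distribution_outputs)

lemma leakage_Tfun_sandwich:
  assumes "finite_order F" "0 < \<alpha>"
  obtains c C where "0 < c"
    and "\<And>N. 0 < N \<Longrightarrow> 2 \<le> card (outputs F N) \<Longrightarrow>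
      0 < Tfun \<alpha> F N \<and> c * Tfun \<alpha> F N \<le> leakage \<alpha> F N \<and> leakage \<alpha> F N \<le> C * Tfun \<alpha> F N"
proof -
  obtain B where "\<And>N. 0 < N \<Longrightarrow> card (outputs F N) \<le> B"
    using assms(1) unfolding finite_order_def by blast
  \<comment> \<open>Bound by Suc B rather than B: the constant for \<alpha> < 1 degenerates to 0 when n = 0.\<close>
  then have D: "nontrivial_distribution (outputs F N) (pdist F N) (Suc B)"
    if "0 < N" "2 \<le> card (outputs F N)" for N
    using finite_distribution_outputs[OF that(1)] that
    by (simp add: nontrivial_distribution_def nontrivial_distribution_axioms_def le_SucI)
  note defs = leakage_def renyi_def Tfun_def pmax_eq_max_prob Let_def
  consider "\<alpha> = \<infinity>" | a where "\<alpha> = ereal a" "1 < a" | "\<alpha> = 1"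
    | a where "\<alpha> = ereal a" "0 < a" "a < 1"
    using assms(2) by (cases \<alpha>) (auto simp: one_ereal_def intro: linorder_cases[of 1])
  then show thesis
  proof cases
    case 1
    show thesis
      by (rule that[of 1 "Suc B"])
        (use 1 nontrivial_distribution.max_prob_less_one[OF D]
           nontrivial_distribution.neg_ln_max_prob_bounds[OF D] in \<open>simp_all add: defs\<close>)
  next
    case (2 a)
    show thesis
      by (rule that[of 1 "a / (a - 1) * Suc B"])
        (use 2 nontrivial_distribution.max_prob_less_one[OF D]
           nontrivial_distribution.renyi_gt1_bounds[OF D] in \<open>simp_all add: defs\<close>)
  next
    case 3
    show thesis
      by (rule that[of 1 "real (Suc B) * real (Suc B) + 1"])
        (use 3 nontrivial_distribution.shannon_bounds[OF D] in \<open>simp_all add: defs\<close>)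
  next
    case (4 a)
    show thesis
      by (rule that[of "(1 - (1 - 1 / Suc B) powr (1 - a)) / (2 * (1 - a))" "Suc B / (1 - a)"])
        (use 4 one_minus_powr_pos[of "Suc B" "1 - a"]
           nontrivial_distribution.renyi_lt1_bounds[OF D] in \<open>simp_all add: defs\<close>)
  qed
qed

lemma INF_SUP_ereal_bounded:
  fixes f :: "'a \<Rightarrow> real"
  assumes "S \<noteq> {}" "0 < c" "\<And>x. x \<in> S \<Longrightarrow> c \<le> f x \<and> f x \<le> C"
  shows "0 < (INF x\<in>S. ereal (f x))
    \<and> (INF x\<in>S. ereal (f x)) \<le> (SUP x\<in>S. ereal (f x))
    \<and> (SUP x\<in>S. ereal (f x)) < \<infinity>"
proof (intro conjI)
  have "ereal c \<le> (INF x\<in>S. ereal (f x))"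
    using assms(3) by (intro INF_greatest) auto
  then show "0 < (INF x\<in>S. ereal (f x))"
    using assms(2) by (meson ereal_less(2) less_le_trans)
  show "(INF x\<in>S. ereal (f x)) \<le> (SUP x\<in>S. ereal (f x))"
    using assms(1) by (rule INF_le_SUP)
  have "(SUP x\<in>S. ereal (f x)) \<le> ereal C"
    using assms(3) by (intro SUP_least) auto
  then show "(SUP x\<in>S. ereal (f x)) < \<infinity>"
    by (rule le_less_trans) simp
qed

theorem proposition1:
  fixes F :: "nat \<Rightarrow> nat \<Rightarrow> 'o" and \<alpha> :: ereal
  assumes "finite_order F"
    and "S = {N. N > 0 \<and> card (outputs F N) \<ge> 2}"
    and "S \<noteq> {}"
    and "0 < \<alpha>"
  shows "0 < (INF N\<in>S. ereal (leakage \<alpha> F N / Tfun \<alpha> F N))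
    \<and> (INF N\<in>S. ereal (leakage \<alpha> F N / Tfun \<alpha> F N))
        \<le> (SUP N\<in>S. ereal (leakage \<alpha> F N / Tfun \<alpha> F N))
    \<and> (SUP N\<in>S. ereal (leakage \<alpha> F N / Tfun \<alpha> F N)) < \<infinity>"
proof -
  obtain c C where "0 < c" and sandwich: "\<And>N. 0 < N \<Longrightarrow> 2 \<le> card (outputs F N) \<Longrightarrow>
      0 < Tfun \<alpha> F N \<and> c * Tfun \<alpha> F N \<le> leakage \<alpha> F N \<and> leakage \<alpha> F N \<le> C * Tfun \<alpha> F N"
    using leakage_Tfun_sandwich[OF assms(1,4)] by blast
  have "c \<le> leakage \<alpha> F N / Tfun \<alpha> F N \<and> leakage \<alpha> F N / Tfun \<alpha> F N \<le> C" if "N \<in> S" for N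
    using sandwich[of N] that assms(2) by (simp add: le_divide_eq divide_le_eq)
  then show ?thesis
    by (rule INF_SUP_ereal_bounded[OF assms(3) \<open>0 < c\<close>])
qed

end
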